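(* Let $\mathcal S=(s_\alpha)_{\alpha\in L(\omega_1)}$ be a ladder system on $\omega_1$ and let $K_{\mathcal S}=\omega_1\cup\{\infty\}$ be the associated ladder system space. Let $\phi:K_{\mathcal S}\to K_{\mathcal S}$ be a continuous map with $\phi(\infty)=\infty$. Then there exists a closed unbounded set $F\subset\omega_1$ such that for every $\alpha\in F$, either $\phi(\alpha)=\alpha$ or $\phi(\alpha)=\infty$.
   Context: $L(\omega_1)$ denotes the set of limit ordinals in $\omega_1$ (the first uncountable ordinal) and $S(\omega_1)=\omega_1\setminus L(\omega_1)$. A ladder system on $\omega_1$ is a family $\mathcal S=(s_\alpha)_{\alpha\in L(\omega_1)}$ where for each limit $\alpha$, $s_\alpha=\{s^n_\alpha:n\in\omega\}$ and $(s^n_\alpha)_{n\in\omega}$ is a strictly increasing sequence in $S(\omega_1)$ converging (in the order sense) to $\alpha$. The ladder system topology $\tau_{\mathcal S}$ on $\omega_1$ is the topology in which every element of $S(\omega_1)$ is isolated and the basic neighborhoods of a limit ordinal $\alpha$ are the sets $\{\alpha\}\cup B$ with $B$ a cofinite subset of $s_\alpha$. This is a locally compact Hausdorff space, and $K_{\mathcal S}=\omega_1\cup\{\infty\}$ is its one-point compactification. "Club" means closed (in the order topology) and unbounded in $\omega_1$. *)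

theory Defs
  imports "HOL-Analysis.Analysis"
begin

(* omega_1 is modelled by a wellorder type 'a that is uncountable and all of whose
   proper initial segments are countable (this characterises omega_1 up to order isomorphism). *)
definition is_omega1_type :: "'a::wellorder itself \<Rightarrow> bool" where
  "is_omega1_type _ \<longleftrightarrow> uncountable (UNIV :: 'a set) \<and> (\<forall>x::'a. countable {..<x})"

definition is_limit :: "'a::wellorder \<Rightarrow> bool" where
  "is_limit x \<longleftrightarrow> (\<exists>y. y < x) \<and> (\<forall>y<x. \<exists>z. y < z \<and> z < x)"

definition ladder_system :: "('a::wellorder \<Rightarrow> nat \<Rightarrow> 'a) \<Rightarrow> bool" where
  "ladder_system s \<longleftrightarrow> (\<forall>\<alpha>. is_limit \<alpha> \<longrightarrow>
      strict_mono (s \<alpha>) \<and> (\<forall>n. \<not> is_limit (s \<alpha> n) \<and> s \<alpha> n < \<alpha>) \<and>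
      (\<forall>\<beta><\<alpha>. \<exists>n. \<beta> < s \<alpha> n))"

(* ladder system topology tau_S: non-limits isolated, limit alpha has basic neighbourhoods
   {alpha} \<union> cofinite part of s_alpha *)
definition ladder_open :: "('a::wellorder \<Rightarrow> nat \<Rightarrow> 'a) \<Rightarrow> 'a set \<Rightarrow> bool" where
  "ladder_open s U \<longleftrightarrow> (\<forall>\<alpha>\<in>U. is_limit \<alpha> \<longrightarrow> finite {n. s \<alpha> n \<notin> U})"

definition ladder_topology :: "('a::wellorder \<Rightarrow> nat \<Rightarrow> 'a) \<Rightarrow> 'a topology" where
  "ladder_topology s = topology (ladder_open s)"

(* K_S = omega_1 \<union> {\<infinity>}, with None playing the role of \<infinity>: one-point compactification *)
definition ladder_space :: "('a::wellorder \<Rightarrow> nat \<Rightarrow> 'a) \<Rightarrow> 'a option topology" where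
  "ladder_space s = topology (\<lambda>U. openin (ladder_topology s) (Some -` U) \<and>
      (None \<in> U \<longrightarrow> compactin (ladder_topology s) (UNIV - Some -` U)))"

definition club :: "'a::wellorder set \<Rightarrow> bool" where
  "club F \<longleftrightarrow> (\<forall>\<beta>. \<exists>\<alpha>\<in>F. \<beta> \<le> \<alpha>) \<and>
     (\<forall>\<alpha>. is_limit \<alpha> \<and> (\<forall>\<beta><\<alpha>. \<exists>\<gamma>\<in>F. \<beta> < \<gamma> \<and> \<gamma> < \<alpha>) \<longrightarrow> \<alpha> \<in> F)"

end

theory Submission
  imports Defs
begin

text \<open>
  The argument closes off under a countable amount of information about \<open>\<phi>\<close>. Every fibre
  \<open>\<phi>\<^sup>-\<^sup>1(\<delta>)\<close> is compact (its complement is a neighbourhood of \<open>\<infinity>\<close>), hence countable, so for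
  each \<open>\<beta>\<close> the set of points mapped into \<open>[0,\<beta>]\<close> together with the image of \<open>[0,\<beta>]\<close> is
  countable. The limits \<open>\<alpha>\<close> for which each such set with \<open>\<beta> < \<alpha>\<close> is bounded strictly below
  \<open>\<alpha>\<close> form a club. If such an \<open>\<alpha>\<close> had \<open>\<phi>(\<alpha>) = \<gamma> < \<alpha>\<close>, continuity would put almost all
  of the ladder \<open>s\<^sub>\<alpha>\<close> into \<open>\<phi>\<^sup>-\<^sup>1[0,\<gamma>]\<close>, a set bounded below \<open>\<alpha>\<close>; if \<open>\<phi>(\<alpha>) = \<gamma> > \<alpha>\<close>, some rung
  \<open>s\<^sub>\<alpha>\<^sup>n\<close> would be mapped above \<open>\<alpha>\<close>, although the image of \<open>[0,s\<^sub>\<alpha>\<^sup>n]\<close> is bounded below \<open>\<alpha>\<close>.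
\<close>

lemma omega1_countable_atMost:
  assumes "is_omega1_type TYPE('a::wellorder)"
  shows "countable {..x::'a}"
proof -
  have "{..x} = insert x {..<x}" by auto
  then show ?thesis using assms by (simp add: is_omega1_type_def)
qed

lemma omega1_countable_bounded:
  assumes "is_omega1_type TYPE('a::wellorder)" "countable (X::'a set)"
  obtains z where "\<forall>x\<in>X. x < z"
proof -
  have "countable (\<Union>x\<in>X. {..x})"
    using assms omega1_countable_atMost by blast
  moreover have "uncountable (UNIV::'a set)" using assms(1) by (simp add: is_omega1_type_def)
  ultimately obtain z where "z \<notin> (\<Union>x\<in>X. {..x})" by (metis UNIV_eq_I)
  then show ?thesis using that by (auto simp: not_le)
qed

lemma omega1_sup_of_increasing:
  fixes a :: "nat \<Rightarrow> 'a::wellorder"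
  assumes "is_omega1_type TYPE('a)" "\<And>n. a n < a (Suc n)"
  obtains \<alpha> :: 'a where "is_limit \<alpha>" "\<And>n. a n < \<alpha>" "\<And>y. y < \<alpha> \<Longrightarrow> \<exists>n. y \<le> a n"
proof
  obtain b where "\<forall>x\<in>range a. x < b"
    using omega1_countable_bounded[OF assms(1), of "range a"] by auto
  then have ex: "\<exists>z. \<forall>n. a n < z" by auto
  define \<alpha> where "\<alpha> = (LEAST z. \<forall>n. a n < z)"
  show below: "a n < \<alpha>" for n unfolding \<alpha>_def using LeastI_ex[OF ex] by blast
  show cofinal: "\<exists>n. y \<le> a n" if "y < \<alpha>" for y
    using not_less_Least[OF that[unfolded \<alpha>_def]] by (auto simp: not_less)
  show "is_limit \<alpha>"
    unfolding is_limit_def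
  proof (intro conjI allI impI)
    show "\<exists>y. y < \<alpha>" using below by blast
    fix y assume "y < \<alpha>"
    then obtain n where "y \<le> a n" using cofinal by blast
    then show "\<exists>z>y. z < \<alpha>" using assms(2) below by (meson le_less_trans)
  qed
qed

definition closure_points :: "('a::wellorder \<Rightarrow> 'a set) \<Rightarrow> 'a set" where
  "closure_points X = {\<alpha>. is_limit \<alpha> \<and> (\<forall>\<beta><\<alpha>. \<exists>z<\<alpha>. X \<beta> \<subseteq> {..<z})}"

lemma closure_points_unbounded:
  assumes "is_omega1_type TYPE('a::wellorder)" "\<And>\<beta>. countable (X \<beta> :: 'a set)"
  shows "\<exists>\<alpha>\<in>closure_points X. \<beta> \<le> \<alpha>"
proof -
  have "\<exists>z. \<forall>y\<in>insert x (\<Union>\<beta>'\<in>{..x}. X \<beta>'). y < z" for x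
  proof -
    have "countable (insert x (\<Union>\<beta>'\<in>{..x}. X \<beta>'))"
      using assms(2) omega1_countable_atMost[OF assms(1)] by simp
    then show ?thesis using omega1_countable_bounded[OF assms(1)] by blast
  qed
  then obtain T where "\<And>x. \<forall>y\<in>insert x (\<Union>\<beta>'\<in>{..x}. X \<beta>'). y < T x" by metis
  then have T_above: "\<And>x. x < T x" and T_bounds: "\<And>x \<beta>'. \<beta>' \<le> x \<Longrightarrow> X \<beta>' \<subseteq> {..<T x}"
    by auto
  define a where "a n = (T ^^ n) \<beta>" for n
  have a_Suc: "a (Suc n) = T (a n)" for n by (simp add: a_def)
  obtain \<alpha> where lim: "is_limit \<alpha>" and below: "\<And>n. a n < \<alpha>"
    and cofinal: "\<And>y. y < \<alpha> \<Longrightarrow> \<exists>n. y \<le> a n"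
    using omega1_sup_of_increasing[OF assms(1), of a] T_above a_Suc by auto
  have "\<exists>z<\<alpha>. X \<beta>' \<subseteq> {..<z}" if "\<beta>' < \<alpha>" for \<beta>'
  proof -
    obtain n where "\<beta>' \<le> a n" using cofinal \<open>\<beta>' < \<alpha>\<close> by blast
    then have "X \<beta>' \<subseteq> {..<a (Suc n)}" using T_bounds a_Suc by simp
    then show ?thesis using below by blast
  qed
  with lim have "\<alpha> \<in> closure_points X" by (simp add: closure_points_def)
  moreover have "\<beta> \<le> \<alpha>" using below[of 0] by (simp add: a_def)
  ultimately show ?thesis by blast
qed

lemma club_closure_points:
  assumes "is_omega1_type TYPE('a::wellorder)" "\<And>\<beta>. countable (X \<beta> :: 'a set)"
  shows "club (closure_points X)"
  unfolding club_def
proof (intro conjI allI impI)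
  show "\<exists>\<alpha>\<in>closure_points X. \<beta> \<le> \<alpha>" for \<beta>
    using closure_points_unbounded[OF assms] .
  fix \<alpha> assume \<alpha>: "is_limit \<alpha> \<and> (\<forall>\<beta><\<alpha>. \<exists>\<gamma>\<in>closure_points X. \<beta> < \<gamma> \<and> \<gamma> < \<alpha>)"
  have "\<exists>z<\<alpha>. X \<beta> \<subseteq> {..<z}" if "\<beta> < \<alpha>" for \<beta>
  proof -
    obtain \<gamma> where \<gamma>: "\<gamma> \<in> closure_points X" "\<beta> < \<gamma>" "\<gamma> < \<alpha>" using \<alpha> \<open>\<beta> < \<alpha>\<close> by blast
    then obtain z where "z < \<gamma>" "X \<beta> \<subseteq> {..<z}" unfolding closure_points_def by blast
    then show ?thesis using \<gamma>(3) less_trans by blast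
  qed
  with \<alpha> show "\<alpha> \<in> closure_points X" by (simp add: closure_points_def)
qed

lemma openin_ladder_topology: "openin (ladder_topology s) = ladder_open s"
  unfolding ladder_topology_def
proof (rule topology_inverse')
  show "istopology (ladder_open s)"
    unfolding istopology_def
  proof (rule conjI; intro allI impI)
    fix S T assume S: "ladder_open s S" and T: "ladder_open s T"
    show "ladder_open s (S \<inter> T)"
      unfolding ladder_open_def
    proof (intro ballI impI)
      fix \<alpha> assume "\<alpha> \<in> S \<inter> T" "is_limit \<alpha>"
      then have "finite ({n. s \<alpha> n \<notin> S} \<union> {n. s \<alpha> n \<notin> T})"
        using S T unfolding ladder_open_def by auto
      then show "finite {n. s \<alpha> n \<notin> S \<inter> T}" by (rule finite_subset[rotated]) auto
    qed
  next
    fix K assume K: "\<forall>U\<in>K. ladder_open s U"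
    show "ladder_open s (\<Union>K)"
      unfolding ladder_open_def
    proof (intro ballI impI)
      fix \<alpha> assume "\<alpha> \<in> \<Union>K" "is_limit \<alpha>"
      then obtain U where U: "U \<in> K" "\<alpha> \<in> U" by auto
      then have "finite {n. s \<alpha> n \<notin> U}" using K \<open>is_limit \<alpha>\<close> unfolding ladder_open_def by blast
      then show "finite {n. s \<alpha> n \<notin> \<Union>K}" by (rule finite_subset[rotated]) (use U in auto)
    qed
  qed
qed

lemma topspace_ladder_topology [simp]: "topspace (ladder_topology s) = UNIV"
  using openin_subset[of "ladder_topology s" UNIV]
  by (auto simp: openin_ladder_topology ladder_open_def)

lemma openin_ladder_space:
  "openin (ladder_space s) U \<longleftrightarrow> ladder_open s (Some -` U) \<and>
      (None \<in> U \<longrightarrow> compactin (ladder_topology s) (UNIV - Some -` U))"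
proof -
  let ?L = "ladder_topology s"
  let ?P = "\<lambda>U. openin ?L (Some -` U) \<and> (None \<in> U \<longrightarrow> compactin ?L (UNIV - Some -` U))"
  have "istopology ?P"
    unfolding istopology_def
  proof (rule conjI; intro allI impI)
    fix S T assume "?P S" "?P T"
    moreover have "UNIV - Some -` (S \<inter> T) = (UNIV - Some -` S) \<union> (UNIV - Some -` T)" by auto
    ultimately show "?P (S \<inter> T)" by (auto simp: vimage_Int intro: compactin_Un)
  next
    fix K assume K: "\<forall>U\<in>K. ?P U"
    have open_Union: "openin ?L (Some -` \<Union>K)"
      unfolding vimage_Union using K by (intro openin_Union) auto
    moreover have "compactin ?L (UNIV - Some -` \<Union>K)" if "None \<in> \<Union>K"
    proof -
      obtain U where U: "U \<in> K" "None \<in> U" using \<open>None \<in> \<Union>K\<close> by auto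
      have "closedin ?L (UNIV - Some -` \<Union>K)" using open_Union by (simp add: closedin_def double_diff)
      moreover have "UNIV - Some -` \<Union>K \<subseteq> UNIV - Some -` U" using U by auto
      ultimately show ?thesis using closed_compactin K U by blast
    qed
    ultimately show "?P (\<Union>K)" by blast
  qed
  then have "openin (ladder_space s) = ?P"
    unfolding ladder_space_def by (rule topology_inverse')
  then show ?thesis by (simp add: openin_ladder_topology)
qed

lemma topspace_ladder_space [simp]: "topspace (ladder_space s) = UNIV"
  using openin_subset[of "ladder_space s" UNIV]
  by (auto simp: openin_ladder_space ladder_open_def)

lemma openin_ladder_space_Some_image:
  "ladder_open s U \<Longrightarrow> openin (ladder_space s) (Some ` U)"
  by (simp add: openin_ladder_space inj_vimage_image_eq)

lemma ladder_open_downward_closed: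
  assumes "ladder_system s" "\<And>x y. x \<in> U \<Longrightarrow> y \<le> x \<Longrightarrow> y \<in> U"
  shows "ladder_open s U"
proof -
  have "s \<alpha> n \<in> U" if "\<alpha> \<in> U" "is_limit \<alpha>" for \<alpha> n
    using assms that unfolding ladder_system_def by (meson less_imp_le)
  then show ?thesis unfolding ladder_open_def by simp
qed

lemma ladder_open_greaterThan:
  assumes "ladder_system s"
  shows "ladder_open s {\<gamma><..}"
  unfolding ladder_open_def
proof (intro ballI impI)
  fix \<alpha> assume "\<alpha> \<in> {\<gamma><..}" "is_limit \<alpha>"
  then have "\<gamma> < \<alpha>" and mono: "strict_mono (s \<alpha>)" and "\<forall>\<beta><\<alpha>. \<exists>n. \<beta> < s \<alpha> n"
    using assms unfolding ladder_system_def by auto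
  then obtain m where m: "\<gamma> < s \<alpha> m" by blast
  have "{n. s \<alpha> n \<notin> {\<gamma><..}} \<subseteq> {..<m}"
  proof
    fix n assume "n \<in> {n. s \<alpha> n \<notin> {\<gamma><..}}"
    then have "\<not> s \<alpha> m \<le> s \<alpha> n" using m by auto
    then show "n \<in> {..<m}" using strict_mono_less_eq[OF mono] by (simp add: not_le)
  qed
  then show "finite {n. s \<alpha> n \<notin> {\<gamma><..}}" using finite_subset by blast
qed

lemma ladder_open_Compl_singleton:
  fixes s :: "'a::wellorder \<Rightarrow> nat \<Rightarrow> 'a"
  assumes "ladder_system s"
  shows "ladder_open s (- {\<delta>})"
  unfolding ladder_open_def
proof (intro ballI impI)
  fix \<alpha> assume "\<alpha> \<in> - {\<delta>}" "is_limit \<alpha>"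
  then have "inj (s \<alpha>)" using assms strict_mono_imp_inj_on unfolding ladder_system_def by blast
  then have "finite (s \<alpha> -` {\<delta>})" by (simp add: finite_vimageI)
  then show "finite {n. s \<alpha> n \<notin> - {\<delta>}}" by (simp add: vimage_def)
qed

lemma compactin_ladder_topology_countable:
  assumes "is_omega1_type TYPE('a::wellorder)" "ladder_system (s :: 'a \<Rightarrow> nat \<Rightarrow> 'a)"
    and "compactin (ladder_topology s) C"
  shows "countable C"
proof -
  have "\<forall>U\<in>range lessThan. openin (ladder_topology s) U"
    by (auto simp: openin_ladder_topology intro: ladder_open_downward_closed[OF assms(2)])
  moreover have "C \<subseteq> \<Union>(range lessThan)"
  proof
    fix x assume "x \<in> C"
    have "countable {x}" by simp
    then obtain z where "\<forall>y\<in>{x}. y < z" by (rule omega1_countable_bounded[OF assms(1)])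
    then show "x \<in> \<Union>(range lessThan)" by auto
  qed
  ultimately obtain F where F: "finite F" "F \<subseteq> range lessThan" "C \<subseteq> \<Union>F"
    using assms(3) unfolding compactin_def by meson
  have "\<forall>U\<in>F. countable U" using F(2) assms(1) by (auto simp: is_omega1_type_def)
  then have "countable (\<Union>U\<in>F. U)" using countable_finite[OF F(1)] by blast
  then have "countable (\<Union>F)" by simp
  then show ?thesis using F(3) countable_subset by blast
qed

lemma continuous_map_ladder_limit:
  assumes "continuous_map (ladder_space s) (ladder_space s) \<phi>"
    and "ladder_open s U" "is_limit \<alpha>" "\<phi> (Some \<alpha>) \<in> Some ` U"
  shows "finite {n. \<phi> (Some (s \<alpha> n)) \<notin> Some ` U}"
proof -
  have "openin (ladder_space s) {p. \<phi> p \<in> Some ` U}"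
    using openin_continuous_map_preimage[OF assms(1) openin_ladder_space_Some_image[OF assms(2)]]
    by simp
  then have "ladder_open s {x. \<phi> (Some x) \<in> Some ` U}"
    by (simp add: openin_ladder_space vimage_def)
  then show ?thesis using assms(3,4) unfolding ladder_open_def by auto
qed

lemma continuous_map_ladder_fibre_countable:
  assumes "is_omega1_type TYPE('a::wellorder)" "ladder_system (s :: 'a \<Rightarrow> nat \<Rightarrow> 'a)"
    and "continuous_map (ladder_space s) (ladder_space s) \<phi>" "\<phi> None = None"
  shows "countable {x. \<phi> (Some x) = Some \<delta>}"
proof -
  have "Some -` (- {Some \<delta>}) = - {\<delta>}" "UNIV - Some -` (- {Some \<delta>}) = {\<delta>}" by auto
  then have "openin (ladder_space s) (- {Some \<delta>})"
    using ladder_open_Compl_singleton[OF assms(2)] by (simp add: openin_ladder_space)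
  then have "openin (ladder_space s) {p. \<phi> p \<noteq> Some \<delta>}"
    using openin_continuous_map_preimage[OF assms(3), of "- {Some \<delta>}"] by simp
  then have "compactin (ladder_topology s) {x. \<phi> (Some x) = Some \<delta>}"
    using assms(4) by (simp add: openin_ladder_space set_diff_eq vimage_def)
  then show ?thesis by (rule compactin_ladder_topology_countable[OF assms(1,2)])
qed

lemma continuous_map_ladder_not_below:
  assumes "ladder_system s" "continuous_map (ladder_space s) (ladder_space s) \<phi>"
    and "\<alpha> \<in> closure_points X" "\<gamma> < \<alpha>" "\<phi> (Some \<alpha>) = Some \<gamma>"
    and "{x. \<exists>\<delta>\<le>\<gamma>. \<phi> (Some x) = Some \<delta>} \<subseteq> X \<gamma>"
  shows False
proof -
  have lim: "is_limit \<alpha>" and "\<exists>z<\<alpha>. X \<gamma> \<subseteq> {..<z}"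
    using assms(3,4) by (auto simp: closure_points_def)
  then obtain z where z: "z < \<alpha>" "X \<gamma> \<subseteq> {..<z}" by blast
  obtain m where m: "z < s \<alpha> m" and mono: "strict_mono (s \<alpha>)"
    using assms(1) lim z(1) unfolding ladder_system_def by blast
  have "n \<in> {n. \<phi> (Some (s \<alpha> n)) \<notin> Some ` {..\<gamma>}}" if "m \<le> n" for n
  proof -
    have "z < s \<alpha> n" using m strict_mono_less_eq[OF mono] that by (meson less_le_trans)
    then have "s \<alpha> n \<notin> X \<gamma>" using z(2) by auto
    then show ?thesis using assms(6) by blast
  qed
  then have "{m..} \<subseteq> {n. \<phi> (Some (s \<alpha> n)) \<notin> Some ` {..\<gamma>}}" by auto
  moreover have "finite {n. \<phi> (Some (s \<alpha> n)) \<notin> Some ` {..\<gamma>}}"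
    using assms(5) by (intro continuous_map_ladder_limit[OF assms(2) _ lim])
      (auto intro: ladder_open_downward_closed[OF assms(1)])
  ultimately show False using finite_subset infinite_Ici by blast
qed

lemma continuous_map_ladder_not_above:
  assumes "ladder_system s" "continuous_map (ladder_space s) (ladder_space s) \<phi>"
    and "\<alpha> \<in> closure_points X" "\<alpha> < \<gamma>" "\<phi> (Some \<alpha>) = Some \<gamma>"
    and "\<And>x y \<beta>. x \<le> \<beta> \<Longrightarrow> \<phi> (Some x) = Some y \<Longrightarrow> y \<in> X \<beta>"
  shows False
proof -
  have lim: "is_limit \<alpha>" using assms(3) by (simp add: closure_points_def)
  have "finite {n. \<phi> (Some (s \<alpha> n)) \<notin> Some ` {\<alpha><..}}"
    using assms(4,5) by (intro continuous_map_ladder_limit[OF assms(2) ladder_open_greaterThan[OF assms(1)] lim]) auto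
  then obtain n where "\<phi> (Some (s \<alpha> n)) \<in> Some ` {\<alpha><..}"
    using infinite_UNIV_nat by (metis (mono_tags) UNIV_eq_I mem_Collect_eq)
  then obtain y where y: "\<phi> (Some (s \<alpha> n)) = Some y" "\<alpha> < y" by auto
  have "s \<alpha> n < \<alpha>" using assms(1) lim unfolding ladder_system_def by blast
  then obtain z where "z < \<alpha>" "X (s \<alpha> n) \<subseteq> {..<z}"
    using assms(3) by (auto simp: closure_points_def)
  moreover have "y \<in> X (s \<alpha> n)" using assms(6)[OF order_refl y(1)] .
  ultimately show False using y(2) by (meson lessThan_iff less_trans not_less_iff_gr_or_eq subsetD)
qed

theorem proposition1:
  fixes s :: "'a::wellorder \<Rightarrow> nat \<Rightarrow> 'a" and \<phi> :: "'a option \<Rightarrow> 'a option"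
  assumes "is_omega1_type TYPE('a)"
    and "ladder_system s"
    and "continuous_map (ladder_space s) (ladder_space s) \<phi>"
    and "\<phi> None = None"
  shows "\<exists>F. club F \<and> (\<forall>\<alpha>\<in>F. \<phi> (Some \<alpha>) = Some \<alpha> \<or> \<phi> (Some \<alpha>) = None)"
proof (intro exI conjI ballI)
  \<comment> \<open>Where \<open>\<phi>\<close> takes the value \<open>\<infinity>\<close>, \<open>the\<close> adds a junk point to \<open>X \<beta>\<close>; only countability
    and the two inclusions demanded by the case lemmas matter.\<close>
  define X where "X \<beta> = (\<Union>\<delta>\<in>{..\<beta>}. {x. \<phi> (Some x) = Some \<delta>}) \<union> (\<lambda>x. the (\<phi> (Some x))) ` {..\<beta>}"
    for \<beta>
  have "countable (X \<beta>)" for \<beta>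
    using continuous_map_ladder_fibre_countable[OF assms] omega1_countable_atMost[OF assms(1)]
    by (simp add: X_def)
  then show "club (closure_points X)" by (rule club_closure_points[OF assms(1)])
  fix \<alpha> assume \<alpha>: "\<alpha> \<in> closure_points X"
  show "\<phi> (Some \<alpha>) = Some \<alpha> \<or> \<phi> (Some \<alpha>) = None"
  proof (cases "\<phi> (Some \<alpha>)")
    case (Some \<gamma>)
    have "\<not> \<gamma> < \<alpha>"
      using continuous_map_ladder_not_below[OF assms(2,3) \<alpha> _ Some] by (auto simp: X_def)
    moreover have "\<not> \<alpha> < \<gamma>"
      using continuous_map_ladder_not_above[OF assms(2,3) \<alpha> _ Some] by (force simp: X_def)
    ultimately show ?thesis using Some by auto
  qed simp
qed

end
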